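(* Let $X(\mathbb{R})$ be a separable Banach function space and let $K$ be a compact operator on $X(\mathbb{R})$. Then for every sequence $\{h_n\}_{n\in\mathbb{N}}\subset\mathbb{R}$ with $h_n\to+\infty$ or $h_n\to-\infty$, the operators $e_{h_n}Ke_{h_n}^{-1}I$ converge strongly to $0$ on $X(\mathbb{R})$, i.e. $\|e_{h_n}K(e_{h_n}^{-1}f)\|_{X(\mathbb{R})}\to0$ for every $f\in X(\mathbb{R})$, where $e_\lambda(x)=e^{i\lambda x}$.
   Context: A Banach function norm is a map $\rho$ from nonnegative measurable functions on $\mathbb{R}$ to $[0,\infty]$ that is a norm-like functional ($\rho(f)=0\iff f=0$ a.e., positive homogeneous, subadditive), has the lattice property ($0\le g\le f$ a.e. implies $\rho(g)\le\rho(f)$), the Fatou property ($0\le f_n\uparrow f$ a.e. implies $\rho(f_n)\uparrow\rho(f)$), satisfies $\rho(\chi_E)<\infty$ and $\int_E f\,dx\le C_E\rho(f)$ for every measurable $E$ with $|E|<\infty$. The Banach function space $X(\mathbb{R})$ is the set of measurable $f$ with $\|f\|_{X(\mathbb{R})}:=\rho(|f|)<\infty$. For a function $a$, $aI$ denotes the operator of multiplication by $a$. *)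

theory Defs
  imports "HOL-Analysis.Analysis"
begin

definition nonneg_meas :: "(real \<Rightarrow> real) set" where
  "nonneg_meas = {f. f \<in> borel_measurable lebesgue \<and> (\<forall>x. 0 \<le> f x)}"

definition banach_function_norm :: "((real \<Rightarrow> real) \<Rightarrow> ennreal) \<Rightarrow> bool" where
  "banach_function_norm \<rho> \<longleftrightarrow>
     (\<forall>f\<in>nonneg_meas. \<rho> f = 0 \<longleftrightarrow> (AE x in lebesgue. f x = 0)) \<and>
     (\<forall>f\<in>nonneg_meas. \<forall>c::real. 0 \<le> c \<longrightarrow> \<rho> (\<lambda>x. c * f x) = ennreal c * \<rho> f) \<and>
     (\<forall>f\<in>nonneg_meas. \<forall>g\<in>nonneg_meas. \<rho> (\<lambda>x. f x + g x) \<le> \<rho> f + \<rho> g) \<and>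
     (\<forall>f\<in>nonneg_meas. \<forall>g\<in>nonneg_meas.
        (AE x in lebesgue. g x \<le> f x) \<longrightarrow> \<rho> g \<le> \<rho> f) \<and>
     (\<forall>F f. (\<forall>n. F n \<in> nonneg_meas) \<longrightarrow> f \<in> nonneg_meas \<longrightarrow>
        (AE x in lebesgue. incseq (\<lambda>n. F n x) \<and> (\<lambda>n. F n x) \<longlonglongrightarrow> f x) \<longrightarrow>
        (SUP n. \<rho> (F n)) = \<rho> f) \<and>
     (\<forall>E \<in> sets lebesgue. emeasure lebesgue E < \<infinity> \<longrightarrow>
        \<rho> (indicator E) < \<infinity> \<and>
        (\<exists>C::real. \<forall>f\<in>nonneg_meas.
            (\<integral>\<^sup>+ x\<in>E. ennreal (f x) \<partial>lebesgue) \<le> ennreal C * \<rho> f))"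

definition bfs :: "((real \<Rightarrow> real) \<Rightarrow> ennreal) \<Rightarrow> (real \<Rightarrow> complex) set" where
  "bfs \<rho> = {f. f \<in> borel_measurable lebesgue \<and> \<rho> (\<lambda>x. cmod (f x)) < \<infinity>}"

definition bfs_norm :: "((real \<Rightarrow> real) \<Rightarrow> ennreal) \<Rightarrow> (real \<Rightarrow> complex) \<Rightarrow> real" where
  "bfs_norm \<rho> f = enn2real (\<rho> (\<lambda>x. cmod (f x)))"

definition bfs_separable :: "((real \<Rightarrow> real) \<Rightarrow> ennreal) \<Rightarrow> bool" where
  "bfs_separable \<rho> \<longleftrightarrow> (\<exists>D. countable D \<and> D \<subseteq> bfs \<rho> \<and>
     (\<forall>f\<in>bfs \<rho>. \<forall>\<epsilon>>0. \<exists>d\<in>D. bfs_norm \<rho> (\<lambda>x. f x - d x) < \<epsilon>))"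

definition bfs_compact_operator ::
  "((real \<Rightarrow> real) \<Rightarrow> ennreal) \<Rightarrow> ((real \<Rightarrow> complex) \<Rightarrow> (real \<Rightarrow> complex)) \<Rightarrow> bool" where
  "bfs_compact_operator \<rho> K \<longleftrightarrow>
     (\<forall>f\<in>bfs \<rho>. K f \<in> bfs \<rho>) \<and>
     (\<forall>f\<in>bfs \<rho>. \<forall>g\<in>bfs \<rho>. K (\<lambda>x. f x + g x) = (\<lambda>x. K f x + K g x)) \<and>
     (\<forall>f\<in>bfs \<rho>. \<forall>c::complex. K (\<lambda>x. c * f x) = (\<lambda>x. c * K f x)) \<and>
     (\<forall>u::nat \<Rightarrow> real \<Rightarrow> complex. (\<forall>n. u n \<in> bfs \<rho>) \<longrightarrow>
        (\<exists>B. \<forall>n. bfs_norm \<rho> (u n) \<le> B) \<longrightarrow>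
        (\<exists>r g. strict_mono r \<and> g \<in> bfs \<rho> \<and>
           (\<lambda>n. bfs_norm \<rho> (\<lambda>x. K (u (r n)) x - g x)) \<longlonglongrightarrow> 0))"

definition expo :: "real \<Rightarrow> real \<Rightarrow> complex" where
  "expo lam x = exp (\<i> * complex_of_real (lam * x))"

end

theory Submission
  imports Defs
begin

text \<open>Modulation by \<open>e\<^sub>\<lambda>\<close> does not change the norm, so \<open>u n = f / expo (h n)\<close> is a bounded
  sequence, and it suffices to show \<open>\<parallel>K (u n)\<parallel> \<rightarrow> 0\<close>. Otherwise compactness yields a subsequence
  with \<open>K (u (q n)) \<rightarrow> g\<close> and \<open>\<parallel>g\<parallel>\<close> bounded below. An average of \<open>N\<close> far-out terms of this
  subsequence is \<open>f\<close> times an average of exponentials with well separated frequencies; an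
  \<open>L\<^sup>2\<close> computation shows that such an average is small on \<open>[-R, R]\<close> outside a set of small
  measure, and separability of \<open>X\<close> makes its norm absolutely continuous, so the averages of
  the \<open>u n\<close> have small norm. As \<open>K\<close> is linear and bounded, \<open>K\<close> maps them to small functions
  which are nevertheless averages of functions close to \<open>g\<close>, a contradiction.\<close>

section \<open>Averages of exponentials\<close>

lemma expo_measurable [measurable]: "expo l \<in> borel_measurable borel"
  unfolding expo_def by measurable

lemma expo_measurable_lebesgue [measurable]: "expo l \<in> borel_measurable lebesgue"
  by (rule measurable_completion) simp

lemma norm_expo [simp]: "cmod (expo l x) = 1"
  unfolding expo_def by (simp add: norm_exp_i_times)

lemma divide_expo: "z / expo l x = z * expo (- l) x"
  unfolding expo_def by (simp add: exp_minus divide_inverse)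

lemma expo_mult_cnj: "expo c y * cnj (expo d y) = exp (\<i> * complex_of_real ((c - d) * y))"
  unfolding expo_def by (simp only: exp_cnj) (simp add: exp_add[symmetric] algebra_simps)

lemma norm_sum_expo_squared:
  "(cmod (\<Sum>a<N. expo (c a) y))\<^sup>2 = (\<Sum>a<N. \<Sum>b<N. cos ((c a - c b) * y))"
proof -
  have "complex_of_real ((cmod (\<Sum>a<N. expo (c a) y))\<^sup>2)
      = (\<Sum>a<N. expo (c a) y) * cnj (\<Sum>a<N. expo (c a) y)"
    by (rule complex_norm_square)
  also have "\<dots> = (\<Sum>a<N. \<Sum>b<N. expo (c a) y * cnj (expo (c b) y))"
    by (simp add: cnj_sum sum_product)
  also have "\<dots> = (\<Sum>a<N. \<Sum>b<N. exp (\<i> * complex_of_real ((c a - c b) * y)))"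
    by (simp add: expo_mult_cnj)
  finally have "(cmod (\<Sum>a<N. expo (c a) y))\<^sup>2
      = Re (\<Sum>a<N. \<Sum>b<N. exp (\<i> * complex_of_real ((c a - c b) * y)))"
    by (metis Re_complex_of_real)
  then show ?thesis by (simp add: Re_exp)
qed

lemma has_integral_cos_scaled:
  fixes s R :: real
  assumes "s \<noteq> 0" "0 \<le> R"
  shows "((\<lambda>y. cos (s * y)) has_integral (2 * sin (s * R) / s)) {-R..R}"
proof -
  have "((\<lambda>y. cos (s * y)) has_integral (sin (s * R) / s - sin (s * (-R)) / s)) {-R..R}"
  proof (rule fundamental_theorem_of_calculus)
    fix x assume "x \<in> {-R..R}"
    have "((\<lambda>y. sin (s * y) / s) has_real_derivative (cos (s * x) * s / s)) (at x within {-R..R})"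
      by (auto intro!: derivative_eq_intros)
    then show "((\<lambda>y. sin (s * y) / s) has_vector_derivative cos (s * x)) (at x within {-R..R})"
      using assms by (simp add: has_real_derivative_iff_has_vector_derivative)
  qed (use assms in simp)
  then show ?thesis by (simp add: field_simps)
qed

lemma integral_cos_scaled_le:
  fixes s R :: real
  assumes "0 \<le> R"
  shows "integral {-R..R} (\<lambda>y. cos (s * y)) \<le> (if s = 0 then 2 * R else 2 / \<bar>s\<bar>)"
proof (cases "s = 0")
  case False
  have "2 * sin (s * R) / s \<le> 2 * \<bar>sin (s * R)\<bar> / \<bar>s\<bar>"
    by (metis abs_divide abs_ge_self abs_mult abs_numeral)
  also have "\<dots> \<le> 2 / \<bar>s\<bar>"
    using False by (intro divide_right_mono) auto
  finally show ?thesis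
    using integral_unique[OF has_integral_cos_scaled[OF False assms]] False by simp
qed (use assms in simp)

lemma mean_square_expo_average_le:
  fixes c :: "nat \<Rightarrow> real"
  assumes N: "N > 0" and R: "0 \<le> R" and D: "D > 0"
    and sep: "\<And>a b. a < N \<Longrightarrow> b < N \<Longrightarrow> a \<noteq> b \<Longrightarrow> D \<le> \<bar>c a - c b\<bar>"
  obtains V where "((\<lambda>y. (cmod ((\<Sum>a<N. expo (c a) y) / of_nat N))\<^sup>2) has_integral V) {-R..R}"
    and "V \<le> 2 * R / N + 2 / D"
proof -
  define I where "I a b = integral {-R..R} (\<lambda>y. cos ((c a - c b) * y))" for a b
  have I: "((\<lambda>y. cos ((c a - c b) * y)) has_integral I a b) {-R..R}" for a b
    unfolding I_def by (intro integrable_integral integrable_continuous_interval continuous_intros)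
  have I_le: "I a b \<le> (if c a = c b then 2 * R else 2 / \<bar>c a - c b\<bar>)" for a b
    unfolding I_def using integral_cos_scaled_le[OF R, of "c a - c b"] by simp
  have I_le': "I a b \<le> (if a = b then 2 * R else 0) + 2 / D" if "a < N" "b < N" for a b
  proof (cases "a = b")
    case False
    with sep that have sep_ab: "D \<le> \<bar>c a - c b\<bar>" by blast
    then have "2 / \<bar>c a - c b\<bar> \<le> 2 / D" using D by (intro divide_left_mono) auto
    moreover have "c a \<noteq> c b" using sep_ab D by auto
    ultimately show ?thesis using I_le[of a b] False by simp
  next
    case True
    have "I a b \<le> 2 * R" using I_le[of a b] True by simp
    moreover have "0 < 2 / D" using D by simp
    ultimately show ?thesis unfolding if_P[OF True] by linarith
  qed
  have "(\<Sum>a<N. \<Sum>b<N. I a b) \<le> (\<Sum>a<N. \<Sum>b<N. (if a = b then 2 * R else 0) + 2 / D)"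
    using I_le' by (intro sum_mono) auto
  also have "\<dots> = N * (2 * R) + N * N * (2 / D)"
    by (simp add: sum.distrib algebra_simps)
  finally have "(\<Sum>a<N. \<Sum>b<N. I a b) / (real N)\<^sup>2 \<le> (N * (2 * R) + N * N * (2 / D)) / (real N)\<^sup>2"
    by (intro divide_right_mono) auto
  also have "\<dots> = 2 * R / N + 2 / D"
    using N by (simp add: field_simps power2_eq_square)
  finally show ?thesis
  proof (intro that)
    have "((\<lambda>y. (\<Sum>a<N. \<Sum>b<N. cos ((c a - c b) * y)) / (real N)\<^sup>2)
        has_integral (\<Sum>a<N. \<Sum>b<N. I a b) / (real N)\<^sup>2) {-R..R}"
      by (intro has_integral_divide has_integral_sum I finite_lessThan)
    then show "((\<lambda>y. (cmod ((\<Sum>a<N. expo (c a) y) / of_nat N))\<^sup>2)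
        has_integral (\<Sum>a<N. \<Sum>b<N. I a b) / (real N)\<^sup>2) {-R..R}"
      by (simp add: norm_divide power_divide norm_sum_expo_squared)
  qed
qed

lemma emeasure_expo_average_ge_le:
  fixes c :: "nat \<Rightarrow> real"
  assumes N: "N > 0" and R: "0 \<le> R" and D: "D > 0" and t: "t > 0"
    and sep: "\<And>a b. a < N \<Longrightarrow> b < N \<Longrightarrow> a \<noteq> b \<Longrightarrow> D \<le> \<bar>c a - c b\<bar>"
  shows "emeasure lebesgue {x \<in> {-R..R}. t \<le> cmod ((\<Sum>a<N. expo (c a) x) / of_nat N)}
           \<le> ennreal ((2 * R / N + 2 / D) / t\<^sup>2)"
proof -
  define g where "g y = (cmod ((\<Sum>a<N. expo (c a) y) / of_nat N))\<^sup>2" for y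
  obtain V where V: "(g has_integral V) {-R..R}" and V_le: "V \<le> 2 * R / N + 2 / D"
    unfolding g_def by (rule mean_square_expo_average_le[where c = c]) (use N R D sep in auto)
  have g_nonneg: "0 \<le> g y" for y unfolding g_def by simp
  have V_nonneg: "0 \<le> V" by (rule has_integral_nonneg[OF V]) (simp add: g_nonneg)
  have g_meas: "(\<lambda>x. ennreal (g x) * indicator {-R..R} x) \<in> borel_measurable lebesgue"
  proof -
    have "(\<lambda>x. ennreal (g x) * indicator {-R..R} x) \<in> borel_measurable borel"
      unfolding g_def by measurable
    then show ?thesis by (simp add: measurable_completion)
  qed
  have "emeasure lebesgue {x \<in> {-R..R}. t \<le> cmod ((\<Sum>a<N. expo (c a) x) / of_nat N)}
      \<le> emeasure lebesgue {x \<in> {-R..R}. 1 \<le> ennreal (1 / t\<^sup>2) * ennreal (g x)}"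
  proof (rule emeasure_mono)
    have "{x \<in> {-R..R}. 1 \<le> ennreal (1 / t\<^sup>2) * ennreal (g x)} \<in> sets borel"
      unfolding g_def by measurable
    then show "{x \<in> {-R..R}. 1 \<le> ennreal (1 / t\<^sup>2) * ennreal (g x)} \<in> sets lebesgue"
      by (simp add: sets_completionI_sets)
    show "{x \<in> {-R..R}. t \<le> cmod ((\<Sum>a<N. expo (c a) x) / of_nat N)}
      \<subseteq> {x \<in> {-R..R}. 1 \<le> ennreal (1 / t\<^sup>2) * ennreal (g x)}"
    proof safe
      fix x assume "t \<le> cmod ((\<Sum>a<N. expo (c a) x) / of_nat N)"
      then have "t\<^sup>2 \<le> g x" unfolding g_def using t by (intro power_mono) auto
      then have "ennreal 1 \<le> ennreal (g x / t\<^sup>2)" using t by (intro ennreal_leI) simp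
      also have "ennreal (g x / t\<^sup>2) = ennreal (1 / t\<^sup>2) * ennreal (g x)"
        using t g_nonneg[of x] by (simp add: ennreal_mult[symmetric] divide_inverse mult.commute)
      finally show "1 \<le> ennreal (1 / t\<^sup>2) * ennreal (g x)" by simp
    qed
  qed
  also have "\<dots> \<le> ennreal (1 / t\<^sup>2) * (\<integral>\<^sup>+ x. ennreal (g x) * indicator {-R..R} x \<partial>lebesgue)"
    by (rule nn_integral_Markov_inequality[OF g_meas]) simp
  also have "(\<integral>\<^sup>+ x. ennreal (g x) * indicator {-R..R} x \<partial>lebesgue) = ennreal V"
    using nn_integral_has_integral_lebesgue'[OF g_nonneg V] by (simp add: nn_integral_completion)
  also have "ennreal (1 / t\<^sup>2) * ennreal V = ennreal (V / t\<^sup>2)"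
    using t V_nonneg by (simp add: ennreal_mult[symmetric] divide_inverse mult.commute)
  also have "\<dots> \<le> ennreal ((2 * R / N + 2 / D) / t\<^sup>2)"
    using V_le t by (intro ennreal_leI divide_right_mono) auto
  finally show ?thesis .
qed

lemma separated_subsequence:
  fixes k :: "nat \<Rightarrow> real"
  assumes k: "filterlim (\<lambda>n. \<bar>k n\<bar>) at_top sequentially" and D: "0 \<le> D"
  obtains p :: "nat \<Rightarrow> nat" where "\<And>i. M \<le> p i" and "\<And>i j. i < j \<Longrightarrow> \<bar>k (p i)\<bar> + D \<le> \<bar>k (p j)\<bar>"
proof -
  have "\<exists>m\<ge>n. \<bar>k n\<bar> + D \<le> \<bar>k m\<bar>" for n
  proof -
    have "eventually (\<lambda>m. \<bar>k n\<bar> + D \<le> \<bar>k m\<bar>) sequentially"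
      using k by (simp add: filterlim_at_top)
    then have "eventually (\<lambda>m. n \<le> m \<and> \<bar>k n\<bar> + D \<le> \<bar>k m\<bar>) sequentially"
      using eventually_ge_at_top[of n] by (simp add: eventually_conj)
    then show ?thesis by (auto dest: eventually_happens'[OF sequentially_bot])
  qed
  then obtain nxt where nxt: "\<And>n. n \<le> nxt n" "\<And>n. \<bar>k n\<bar> + D \<le> \<bar>k (nxt n)\<bar>" by metis
  define p where "p i = (nxt ^^ i) M" for i
  have p_Suc: "p (Suc i) = nxt (p i)" for i by (simp add: p_def)
  show ?thesis
  proof (rule that[of p])
    show "M \<le> p i" for i
      by (induction i) (auto simp: p_def intro: order.trans[OF _ nxt(1)])
    have "\<bar>k (p j)\<bar> \<le> \<bar>k (p (Suc j))\<bar>" for j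
      using nxt(2)[of "p j"] D by (simp add: p_Suc)
    then have mono: "\<bar>k (p i)\<bar> \<le> \<bar>k (p j)\<bar>" if "i \<le> j" for i j
      using lift_Suc_mono_le[of "\<lambda>j. \<bar>k (p j)\<bar>"] that by blast
    show "\<bar>k (p i)\<bar> + D \<le> \<bar>k (p j)\<bar>" if "i < j" for i j
      using nxt(2)[of "p i"] mono[of "Suc i" j] that by (simp add: p_Suc)
  qed
qed

text \<open>The separation \<open>D\<close> is chosen first and then the number \<open>N\<close> of frequencies, so that
  both terms of the bound in \<open>emeasure_expo_average_ge_le\<close> are small.\<close>
lemma emeasure_expo_average_ge_small:
  fixes k :: "nat \<Rightarrow> real"
  assumes k: "filterlim (\<lambda>n. \<bar>k n\<bar>) at_top sequentially"
    and R: "0 \<le> R" and \<eta>: "\<eta> > 0" and t: "t > 0"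
  obtains N :: nat and p :: "nat \<Rightarrow> nat" where "N > 0" and "\<And>i. M \<le> p i"
    and "emeasure lebesgue {x \<in> {-R..R}. t \<le> cmod ((\<Sum>i<N. expo (k (p i)) x) / of_nat N)} < ennreal \<eta>"
proof -
  define D where "D = 4 / (\<eta> * t\<^sup>2)"
  define N where "N = nat \<lceil>4 * R / (\<eta> * t\<^sup>2)\<rceil> + 1"
  have \<eta>t: "\<eta> * t\<^sup>2 > 0" using \<eta> t by simp
  have D: "D > 0" using \<eta>t by (simp add: D_def)
  have N: "N > 0" by (simp add: N_def)
  have "4 * R / (\<eta> * t\<^sup>2) < real N"
    unfolding N_def using real_nat_ceiling_ge[of "4 * R / (\<eta> * t\<^sup>2)"] by linarith
  then have "2 * R / N < \<eta> * t\<^sup>2 / 2" using \<eta>t N by (simp add: field_simps)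
  moreover have "2 / D = \<eta> * t\<^sup>2 / 2" using \<eta>t by (simp add: D_def field_simps)
  ultimately have "2 * R / N + 2 / D < \<eta> * t\<^sup>2" by linarith
  then have small: "(2 * R / N + 2 / D) / t\<^sup>2 < \<eta>" using t by (simp add: divide_less_eq)
  obtain p :: "nat \<Rightarrow> nat" where p: "\<And>i. M \<le> p i" and sep: "\<And>i j. i < j \<Longrightarrow> \<bar>k (p i)\<bar> + D \<le> \<bar>k (p j)\<bar>"
    using separated_subsequence[OF k less_imp_le[OF D]] by blast
  have "D \<le> \<bar>k (p i) - k (p j)\<bar>" if "i \<noteq> j" for i j
    using sep[of i j] sep[of j i] that by (cases "i < j") auto
  then have "emeasure lebesgue {x \<in> {-R..R}. t \<le> cmod ((\<Sum>i<N. expo (k (p i)) x) / of_nat N)}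
      \<le> ennreal ((2 * R / N + 2 / D) / t\<^sup>2)"
    by (intro emeasure_expo_average_ge_le N R D t)
  also have "\<dots> < ennreal \<eta>" using small \<eta> by (simp add: ennreal_lessI)
  finally show ?thesis using N p that by blast
qed

section \<open>Banach function spaces\<close>

lemma cmod_in_nonneg_meas: "f \<in> borel_measurable lebesgue \<Longrightarrow> (\<lambda>x. cmod (f x)) \<in> nonneg_meas"
  unfolding nonneg_meas_def by auto

lemma bfs_measurable: "a \<in> bfs \<rho> \<Longrightarrow> a \<in> borel_measurable lebesgue"
  unfolding bfs_def by auto

lemma bfs_norm_nonneg: "0 \<le> bfs_norm \<rho> f"
  unfolding bfs_norm_def by simp

lemma bfs_norm_diff_commute: "bfs_norm \<rho> (\<lambda>x. a x - b x) = bfs_norm \<rho> (\<lambda>x. b x - a x)"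
  by (simp add: bfs_norm_def norm_minus_commute)

lemma ennreal_bfs_norm: "a \<in> bfs \<rho> \<Longrightarrow> ennreal (bfs_norm \<rho> a) = \<rho> (\<lambda>x. cmod (a x))"
  unfolding bfs_def bfs_norm_def by (auto simp: ennreal_enn2real_if)

lemma bfs_norm_mult_unimodular:
  assumes "\<And>x. cmod (c x) = 1"
  shows "bfs_norm \<rho> (\<lambda>x. c x * g x) = bfs_norm \<rho> g"
  using assms by (simp add: bfs_norm_def norm_mult)

locale bf_norm =
  fixes \<rho> :: "(real \<Rightarrow> real) \<Rightarrow> ennreal"
  assumes banach_function_norm: "banach_function_norm \<rho>"
begin

lemma rho_mono: "f \<in> nonneg_meas \<Longrightarrow> g \<in> nonneg_meas \<Longrightarrow> (\<And>x. g x \<le> f x) \<Longrightarrow> \<rho> g \<le> \<rho> f"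
  using banach_function_norm unfolding banach_function_norm_def by auto

lemma rho_add: "f \<in> nonneg_meas \<Longrightarrow> g \<in> nonneg_meas \<Longrightarrow> \<rho> (\<lambda>x. f x + g x) \<le> \<rho> f + \<rho> g"
  using banach_function_norm unfolding banach_function_norm_def by auto

lemma rho_mult: "f \<in> nonneg_meas \<Longrightarrow> 0 \<le> c \<Longrightarrow> \<rho> (\<lambda>x. c * f x) = ennreal c * \<rho> f"
  using banach_function_norm unfolding banach_function_norm_def by auto

lemma rho_SUP:
  "(\<And>n. F n \<in> nonneg_meas) \<Longrightarrow> f \<in> nonneg_meas \<Longrightarrow>
   (AE x in lebesgue. incseq (\<lambda>n. F n x) \<and> (\<lambda>n. F n x) \<longlonglongrightarrow> f x) \<Longrightarrow> (SUP n. \<rho> (F n)) = \<rho> f"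
  using banach_function_norm unfolding banach_function_norm_def by blast

lemma rho_zero: "\<rho> (\<lambda>x. 0) = 0"
  using rho_mult[of "\<lambda>x. 0" 0] by (simp add: nonneg_meas_def)

lemma bfs_dominated_by_sum:
  assumes a: "a \<in> bfs \<rho>" and b: "b \<in> bfs \<rho>" and g: "g \<in> borel_measurable lebesgue"
    and le: "\<And>x. cmod (g x) \<le> cmod (a x) + cmod (b x)"
  shows "g \<in> bfs \<rho>" "bfs_norm \<rho> g \<le> bfs_norm \<rho> a + bfs_norm \<rho> b"
proof -
  have "\<rho> (\<lambda>x. cmod (g x)) \<le> \<rho> (\<lambda>x. cmod (a x) + cmod (b x))"
    using a b g le by (intro rho_mono) (auto simp: nonneg_meas_def bfs_def)
  also have "\<dots> \<le> \<rho> (\<lambda>x. cmod (a x)) + \<rho> (\<lambda>x. cmod (b x))"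
    using a b by (intro rho_add cmod_in_nonneg_meas bfs_measurable)
  also have "\<dots> = ennreal (bfs_norm \<rho> a + bfs_norm \<rho> b)"
    using a b by (simp add: ennreal_plus bfs_norm_nonneg ennreal_bfs_norm)
  finally have le_sum: "\<rho> (\<lambda>x. cmod (g x)) \<le> ennreal (bfs_norm \<rho> a + bfs_norm \<rho> b)" .
  then have "\<rho> (\<lambda>x. cmod (g x)) < \<infinity>" by (rule le_less_trans) simp
  with g show "g \<in> bfs \<rho>" unfolding bfs_def by simp
  from le_sum show "bfs_norm \<rho> g \<le> bfs_norm \<rho> a + bfs_norm \<rho> b"
    unfolding bfs_norm_def by (simp add: enn2real_leI bfs_norm_nonneg add_nonneg_nonneg)
qed

lemma bfs_dominated_by_mult:
  assumes a: "a \<in> bfs \<rho>" and g: "g \<in> borel_measurable lebesgue" and c: "0 \<le> c"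
    and le: "\<And>x. cmod (g x) \<le> c * cmod (a x)"
  shows "g \<in> bfs \<rho>" "bfs_norm \<rho> g \<le> c * bfs_norm \<rho> a"
proof -
  have "\<rho> (\<lambda>x. cmod (g x)) \<le> \<rho> (\<lambda>x. c * cmod (a x))"
    using a g c le by (intro rho_mono) (auto simp: nonneg_meas_def bfs_def)
  also have "\<dots> = ennreal (c * bfs_norm \<rho> a)"
    using a c by (simp add: rho_mult cmod_in_nonneg_meas bfs_measurable ennreal_bfs_norm
        bfs_norm_nonneg ennreal_mult)
  finally have le_mult: "\<rho> (\<lambda>x. cmod (g x)) \<le> ennreal (c * bfs_norm \<rho> a)" .
  then have "\<rho> (\<lambda>x. cmod (g x)) < \<infinity>" by (rule le_less_trans) simp
  with g show "g \<in> bfs \<rho>" unfolding bfs_def by simp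
  from le_mult show "bfs_norm \<rho> g \<le> c * bfs_norm \<rho> a"
    unfolding bfs_norm_def using c by (simp add: enn2real_leI bfs_norm_nonneg)
qed

lemma bfs_zero: "(\<lambda>x. 0) \<in> bfs \<rho>"
  unfolding bfs_def by (simp add: rho_zero)

lemma bfs_norm_zero: "bfs_norm \<rho> (\<lambda>x. 0) = 0"
  unfolding bfs_norm_def by (simp add: rho_zero)

lemma bfs_diff:
  assumes a: "a \<in> bfs \<rho>" and b: "b \<in> bfs \<rho>"
  shows "(\<lambda>x. a x - b x) \<in> bfs \<rho>"
  using bfs_measurable[OF a] bfs_measurable[OF b]
  by (intro bfs_dominated_by_sum(1)[OF a b]) (auto simp: norm_triangle_ineq4)

lemma bfs_mult:
  assumes a: "a \<in> bfs \<rho>"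
  shows "(\<lambda>x. c * a x) \<in> bfs \<rho>"
  using bfs_measurable[OF a] by (intro bfs_dominated_by_mult(1)[OF a, of _ "cmod c"]) (auto simp: norm_mult)

lemma bfs_mult_indicator:
  assumes a: "a \<in> bfs \<rho>" and A: "A \<in> sets lebesgue"
  shows "(\<lambda>x. a x * indicator A x) \<in> bfs \<rho>"
proof (rule bfs_dominated_by_mult(1)[OF a _ zero_le_one])
  show "(\<lambda>x. a x * indicator A x) \<in> borel_measurable lebesgue"
    using bfs_measurable[OF a] A by measurable
qed (simp add: indicator_def)

lemma bfs_norm_triangle:
  assumes a: "a \<in> bfs \<rho>" and b: "b \<in> bfs \<rho>" and c: "c \<in> bfs \<rho>"
  shows "bfs_norm \<rho> (\<lambda>x. a x - c x) \<le> bfs_norm \<rho> (\<lambda>x. a x - b x) + bfs_norm \<rho> (\<lambda>x. b x - c x)"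
  using bfs_measurable[OF a] bfs_measurable[OF c] norm_triangle_ineq[of "a x - b x" "b x - c x" for x]
  by (intro bfs_dominated_by_sum(2)[OF bfs_diff[OF a b] bfs_diff[OF b c]]) auto

lemma bfs_norm_le_diff_add:
  assumes a: "a \<in> bfs \<rho>" and b: "b \<in> bfs \<rho>"
  shows "bfs_norm \<rho> a \<le> bfs_norm \<rho> (\<lambda>x. a x - b x) + bfs_norm \<rho> b"
  using bfs_measurable[OF a] norm_triangle_ineq[of "a x - b x" "b x" for x]
  by (intro bfs_dominated_by_sum(2)[OF bfs_diff[OF a b] b]) auto

lemma bfs_sum:
  assumes "finite A" "\<And>a. a \<in> A \<Longrightarrow> u a \<in> bfs \<rho>"
  shows "(\<lambda>x. \<Sum>a\<in>A. u a x) \<in> bfs \<rho> \<and> bfs_norm \<rho> (\<lambda>x. \<Sum>a\<in>A. u a x) \<le> (\<Sum>a\<in>A. bfs_norm \<rho> (u a))"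
  using assms
proof (induction A rule: finite_induct)
  case (insert a A)
  then have a: "u a \<in> bfs \<rho>" and IH: "(\<lambda>x. \<Sum>a\<in>A. u a x) \<in> bfs \<rho>"
    "bfs_norm \<rho> (\<lambda>x. \<Sum>a\<in>A. u a x) \<le> (\<Sum>a\<in>A. bfs_norm \<rho> (u a))" by auto
  have "(\<lambda>x. u a x + (\<Sum>a\<in>A. u a x)) \<in> borel_measurable lebesgue"
    using a IH(1) by (intro borel_measurable_add bfs_measurable)
  then have "(\<lambda>x. u a x + (\<Sum>a\<in>A. u a x)) \<in> bfs \<rho>"
    "bfs_norm \<rho> (\<lambda>x. u a x + (\<Sum>a\<in>A. u a x)) \<le> bfs_norm \<rho> (u a) + bfs_norm \<rho> (\<lambda>x. \<Sum>a\<in>A. u a x)"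
    by (rule bfs_dominated_by_sum[OF a IH(1)], simp add: norm_triangle_ineq)+
  with insert IH(2) show ?case by simp
qed (simp add: bfs_zero bfs_norm_zero)

lemma bfs_norm_indicator_mono:
  assumes f: "f \<in> bfs \<rho>" and S: "S \<in> sets lebesgue" and T: "T \<in> sets lebesgue" and "S \<subseteq> T"
  shows "bfs_norm \<rho> (\<lambda>x. f x * indicator S x) \<le> bfs_norm \<rho> (\<lambda>x. f x * indicator T x)"
proof -
  have "cmod (f x * indicator S x) \<le> 1 * cmod (f x * indicator T x)" for x
    using \<open>S \<subseteq> T\<close> by (auto simp: indicator_def)
  then show ?thesis
    using bfs_dominated_by_mult(2)[OF bfs_mult_indicator[OF f T]
        bfs_measurable[OF bfs_mult_indicator[OF f S]] zero_le_one]
    by simp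
qed

lemma bfs_norm_indicator_Un_le:
  assumes f: "f \<in> bfs \<rho>" and S: "S \<in> sets lebesgue" and T: "T \<in> sets lebesgue"
  shows "bfs_norm \<rho> (\<lambda>x. f x * indicator (S \<union> T) x)
    \<le> bfs_norm \<rho> (\<lambda>x. f x * indicator S x) + bfs_norm \<rho> (\<lambda>x. f x * indicator T x)"
  using bfs_measurable[OF bfs_mult_indicator[OF f sets.Un[OF S T]]]
  by (intro bfs_dominated_by_sum(2) bfs_mult_indicator[OF f] S T) (auto simp: indicator_def)

lemma bfs_norm_mult_const_le:
  assumes a: "a \<in> bfs \<rho>"
  shows "bfs_norm \<rho> (\<lambda>x. c * a x) \<le> cmod c * bfs_norm \<rho> a"
  using bfs_measurable[OF a] by (intro bfs_dominated_by_mult(2)[OF a]) (auto simp: norm_mult)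

lemma bfs_norm_average_diff_le:
  assumes N: "N > 0" and a: "\<And>i. i < N \<Longrightarrow> a i \<in> bfs \<rho>" and g: "g \<in> bfs \<rho>"
    and close: "\<And>i. i < N \<Longrightarrow> bfs_norm \<rho> (\<lambda>x. a i x - g x) \<le> \<epsilon>"
  shows "bfs_norm \<rho> (\<lambda>x. (\<Sum>i<N. a i x) / of_nat N - g x) \<le> \<epsilon>"
proof -
  define z where "z i = (\<lambda>x. inverse (of_nat N) * (a i x - g x))" for i
  have z: "z i \<in> bfs \<rho>" if "i < N" for i
    unfolding z_def using a[OF that] g by (intro bfs_mult bfs_diff)
  have eq: "(\<lambda>x. (\<Sum>i<N. a i x) / of_nat N - g x) = (\<lambda>x. \<Sum>i<N. z i x)"
    using N by (simp add: z_def fun_eq_iff sum_subtractf divide_inverse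
        sum_distrib_left[symmetric] algebra_simps)
  have "bfs_norm \<rho> (\<lambda>x. \<Sum>i<N. z i x) \<le> (\<Sum>i<N. bfs_norm \<rho> (z i))"
    using bfs_sum[of "{..<N}" z] z by simp
  also have "\<dots> \<le> (\<Sum>i<N. inverse (real N) * \<epsilon>)"
  proof (rule sum_mono)
    fix i assume "i \<in> {..<N}"
    then have "bfs_norm \<rho> (z i) \<le> cmod (inverse (of_nat N :: complex)) * bfs_norm \<rho> (\<lambda>x. a i x - g x)"
      unfolding z_def using a g by (intro bfs_norm_mult_const_le bfs_diff) auto
    also have "\<dots> \<le> inverse (real N) * \<epsilon>"
      using close \<open>i \<in> {..<N}\<close> by (simp add: norm_inverse mult_left_mono)
    finally show "bfs_norm \<rho> (z i) \<le> inverse (real N) * \<epsilon>" .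
  qed
  also have "\<dots> = \<epsilon>" using N by simp
  finally show ?thesis unfolding eq .
qed

end

section \<open>Absolute continuity of the norm\<close>

context bf_norm
begin

lemma countable_UNIV_if_bfs_separated:
  fixes W :: "'a \<Rightarrow> real \<Rightarrow> complex"
  assumes sep: "bfs_separable \<rho>" and \<delta>: "\<delta> > 0" and W: "\<And>i. W i \<in> bfs \<rho>"
    and far: "\<And>i j. i \<noteq> j \<Longrightarrow> \<delta> \<le> bfs_norm \<rho> (\<lambda>x. W i x - W j x)"
  shows "countable (UNIV :: 'a set)"
proof -
  obtain D where D: "countable D" "D \<subseteq> bfs \<rho>"
    and dense: "\<And>g e. g \<in> bfs \<rho> \<Longrightarrow> e > 0 \<Longrightarrow> \<exists>d\<in>D. bfs_norm \<rho> (\<lambda>x. g x - d x) < e"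
    using sep unfolding bfs_separable_def by blast
  obtain d where d: "\<And>i. d i \<in> D" "\<And>i. bfs_norm \<rho> (\<lambda>x. W i x - d i x) < \<delta> / 2"
    using dense[OF W, of "\<delta> / 2"] \<delta> by (metis half_gt_zero)
  have "inj d"
  proof (rule injI, rule ccontr)
    fix i j assume eq: "d i = d j" and "i \<noteq> j"
    have "bfs_norm \<rho> (\<lambda>x. W i x - W j x)
        \<le> bfs_norm \<rho> (\<lambda>x. W i x - d i x) + bfs_norm \<rho> (\<lambda>x. d i x - W j x)"
      using W d D(2) by (intro bfs_norm_triangle) auto
    also have "bfs_norm \<rho> (\<lambda>x. d i x - W j x) = bfs_norm \<rho> (\<lambda>x. W j x - d j x)"
      using eq bfs_norm_diff_commute by metis
    finally have "bfs_norm \<rho> (\<lambda>x. W i x - W j x) < \<delta>" using d(2)[of i] d(2)[of j] by linarith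
    with far[OF \<open>i \<noteq> j\<close>] show False by simp
  qed
  moreover have "countable (range d)" using D(1) d(1) by (meson countable_subset image_subsetI)
  ultimately show ?thesis by (rule countable_image_inj_on[rotated])
qed

text \<open>The functions obtained by restricting \<open>f\<close> to all unions of subfamilies of \<open>G\<close>
  would otherwise form an uncountable separated family.\<close>
lemma bfs_separable_disjoint_family_small:
  fixes G :: "nat \<Rightarrow> real set"
  assumes sep: "bfs_separable \<rho>" and f: "f \<in> bfs \<rho>" and \<delta>: "\<delta> > 0"
    and G: "\<And>j. G j \<in> sets lebesgue" and disj: "\<And>i j. i \<noteq> j \<Longrightarrow> G i \<inter> G j = {}"
  shows "\<exists>j. bfs_norm \<rho> (\<lambda>x. f x * indicator (G j) x) < \<delta>"
proof (rule ccontr)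
  assume "\<not> ?thesis"
  then have big: "\<delta> \<le> bfs_norm \<rho> (\<lambda>x. f x * indicator (G j) x)" for j by (simp add: not_less)
  define W where "W S = (\<lambda>x. f x * indicator (\<Union>j\<in>S. G j) x)" for S :: "nat set"
  have W: "W S \<in> bfs \<rho>" for S
  proof -
    have "(\<Union>j\<in>S. G j) \<in> sets lebesgue" using G by (intro sets.countable_UN'[OF countableI_type]) auto
    then show ?thesis unfolding W_def by (rule bfs_mult_indicator[OF f])
  qed
  have far: "\<delta> \<le> bfs_norm \<rho> (\<lambda>x. W S x - W S' x)" if "j \<in> S" "j \<notin> S'" for S S' j
  proof -
    have "x \<notin> (\<Union>i\<in>S'. G i)" if "x \<in> G j" for x
    proof
      assume "x \<in> (\<Union>i\<in>S'. G i)"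
      then obtain i where "i \<in> S'" "x \<in> G i" by blast
      with \<open>j \<notin> S'\<close> have "x \<in> G i \<inter> G j" "i \<noteq> j" using that by auto
      with disj show False by blast
    qed
    then have "cmod (f x * indicator (G j) x) \<le> 1 * cmod (W S x - W S' x)" for x
      using \<open>j \<in> S\<close> by (cases "x \<in> G j") (auto simp: W_def indicator_def)
    then have "bfs_norm \<rho> (\<lambda>x. f x * indicator (G j) x) \<le> 1 * bfs_norm \<rho> (\<lambda>x. W S x - W S' x)"
      using bfs_mult_indicator[OF f G] W
      by (intro bfs_dominated_by_mult(2)[OF bfs_diff] bfs_measurable) auto
    with big[of j] show ?thesis by simp
  qed
  have "countable (UNIV :: nat set set)"
  proof (rule countable_UNIV_if_bfs_separated[OF sep \<delta> W])
    fix S S' :: "nat set" assume "S \<noteq> S'"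
    then obtain j where "j \<in> S \<and> j \<notin> S' \<or> j \<in> S' \<and> j \<notin> S" by blast
    then show "\<delta> \<le> bfs_norm \<rho> (\<lambda>x. W S x - W S' x)"
      using far bfs_norm_diff_commute by metis
  qed
  then show False
    by (metis Cantors_theorem Int_UNIV_left Int_lower1 Pow_not_empty countable_subset uncountable_def)
qed

lemma exists_bfs_norm_indicator_diff_gt:
  assumes f: "f \<in> bfs \<rho>" and B: "\<And>m. B m \<in> sets lebesgue" and dec: "decseq B"
    and null: "(\<Inter>m. B m) \<in> null_sets lebesgue"
    and "0 \<le> \<epsilon>" and less: "\<epsilon> < bfs_norm \<rho> (\<lambda>x. f x * indicator (B m) x)"
  shows "\<exists>n. \<epsilon> < bfs_norm \<rho> (\<lambda>x. f x * indicator (B m - B n) x)"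
proof -
  define F where "F n = (\<lambda>x. cmod (f x * indicator (B m - B n) x))" for n
  have fB: "(\<lambda>x. f x * indicator (B m - B n) x) \<in> bfs \<rho>" for n
    using B by (intro bfs_mult_indicator[OF f]) auto
  have "(SUP n. \<rho> (F n)) = \<rho> (\<lambda>x. cmod (f x * indicator (B m) x))"
  proof (rule rho_SUP)
    show "F n \<in> nonneg_meas" for n
      unfolding F_def using fB by (intro cmod_in_nonneg_meas bfs_measurable)
    show "(\<lambda>x. cmod (f x * indicator (B m) x)) \<in> nonneg_meas"
      using bfs_mult_indicator[OF f B] by (intro cmod_in_nonneg_meas bfs_measurable)
    show "AE x in lebesgue. incseq (\<lambda>n. F n x) \<and> (\<lambda>n. F n x) \<longlonglongrightarrow> cmod (f x * indicator (B m) x)"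
      using AE_not_in[OF null]
    proof eventually_elim
      case (elim x)
      then obtain n0 where n0: "x \<notin> B n0" by blast
      have "incseq (\<lambda>n. F n x)"
        using dec by (auto simp: incseq_def decseq_def F_def indicator_def)
      moreover from n0 dec have "\<forall>n\<ge>n0. F n x = cmod (f x * indicator (B m) x)"
        by (auto simp: decseq_def F_def indicator_def)
      then have "(\<lambda>n. F n x) \<longlonglongrightarrow> cmod (f x * indicator (B m) x)"
        by (intro tendsto_eventually) (auto simp: eventually_sequentially)
      ultimately show ?case ..
    qed
  qed
  moreover have "ennreal \<epsilon> < ennreal (bfs_norm \<rho> (\<lambda>x. f x * indicator (B m) x))"
    using less \<open>0 \<le> \<epsilon>\<close> by (intro ennreal_lessI) auto
  then have "ennreal \<epsilon> < \<rho> (\<lambda>x. cmod (f x * indicator (B m) x))"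
    using ennreal_bfs_norm[OF bfs_mult_indicator[OF f B[of m]]] by simp
  ultimately obtain n where "ennreal \<epsilon> < \<rho> (F n)" by (metis less_SUP_iff)
  then have "\<epsilon> < bfs_norm \<rho> (\<lambda>x. f x * indicator (B m - B n) x)"
    unfolding F_def using ennreal_bfs_norm[OF fB] by (metis ennreal_leI leD not_le)
  then show ?thesis ..
qed

lemma bfs_norm_indicator_decseq_small:
  assumes sep: "bfs_separable \<rho>" and f: "f \<in> bfs \<rho>"
    and B: "\<And>m. B m \<in> sets lebesgue" and dec: "decseq B"
    and null: "(\<Inter>m. B m) \<in> null_sets lebesgue" and \<epsilon>: "\<epsilon> > 0"
  shows "\<exists>m. bfs_norm \<rho> (\<lambda>x. f x * indicator (B m) x) < \<epsilon>"
proof (rule ccontr)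
  assume "\<not> ?thesis"
  then have ge: "\<epsilon> \<le> bfs_norm \<rho> (\<lambda>x. f x * indicator (B m) x)" for m by (simp add: not_less)
  have "\<epsilon> / 2 < bfs_norm \<rho> (\<lambda>x. f x * indicator (B m) x)" for m
    using ge[of m] \<epsilon> by linarith
  then obtain nxt where nxt: "\<And>m. \<epsilon> / 2 < bfs_norm \<rho> (\<lambda>x. f x * indicator (B m - B (nxt m)) x)"
    using exists_bfs_norm_indicator_diff_gt[OF f B dec null] \<epsilon> by (metis half_gt_zero less_imp_le)
  have less_nxt: "m < nxt m" for m
  proof (rule ccontr)
    assume "\<not> m < nxt m"
    then have empty: "B m - B (nxt m) = {}" using dec by (auto simp: decseq_def)
    show False using nxt[of m] \<epsilon> unfolding empty by (simp add: bfs_norm_zero)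
  qed
  define idx where "idx j = (nxt ^^ j) 0" for j
  have idx_Suc: "idx (Suc j) = nxt (idx j)" for j by (simp add: idx_def)
  have "strict_mono idx" unfolding strict_mono_Suc_iff idx_Suc using less_nxt by simp
  define G where "G j = B (idx j) - B (idx (Suc j))" for j
  have "G i \<inter> G j = {}" if "i < j" for i j
  proof -
    have "idx (Suc i) \<le> idx j"
      using \<open>strict_mono idx\<close> that by (simp add: strict_mono_less_eq)
    then show ?thesis using dec by (auto simp: G_def decseq_def)
  qed
  then have disj: "G i \<inter> G j = {}" if "i \<noteq> j" for i j
    using that by (metis Int_commute linorder_neqE_nat)
  have G: "G j \<in> sets lebesgue" for j using B unfolding G_def by auto
  obtain j where "bfs_norm \<rho> (\<lambda>x. f x * indicator (G j) x) < \<epsilon> / 2"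
    using bfs_separable_disjoint_family_small[where G = G, OF sep f half_gt_zero[OF \<epsilon>] G disj] by blast
  with nxt[of "idx j"] show False by (simp add: G_def idx_Suc)
qed

lemma bfs_norm_indicator_small_measure:
  assumes sep: "bfs_separable \<rho>" and f: "f \<in> bfs \<rho>" and \<epsilon>: "\<epsilon> > 0"
  shows "\<exists>\<eta>>0. \<forall>A\<in>sets lebesgue. emeasure lebesgue A < ennreal \<eta> \<longrightarrow>
            bfs_norm \<rho> (\<lambda>x. f x * indicator A x) < \<epsilon>"
proof (rule ccontr)
  assume neg: "\<not> ?thesis"
  have "\<exists>A\<in>sets lebesgue. emeasure lebesgue A < ennreal \<eta> \<and>
      \<epsilon> \<le> bfs_norm \<rho> (\<lambda>x. f x * indicator A x)" if "\<eta> > 0" for \<eta>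
    using that neg by (meson not_less)
  then have "\<exists>A\<in>sets lebesgue. emeasure lebesgue A < ennreal ((1/2)^k) \<and>
      \<epsilon> \<le> bfs_norm \<rho> (\<lambda>x. f x * indicator A x)" for k :: nat
    by simp
  then obtain A where A: "\<And>k. A k \<in> sets lebesgue" "\<And>k. emeasure lebesgue (A k) < ennreal ((1/2)^k)"
    "\<And>k. \<epsilon> \<le> bfs_norm \<rho> (\<lambda>x. f x * indicator (A k) x)" by metis
  have finite: "emeasure lebesgue (A k) < \<infinity>" for k
    using A(2)[of k] by (simp add: order.strict_trans)
  have measure_le: "norm (measure lebesgue (A k)) \<le> (1/2)^k" for k
    unfolding measure_def using A(2)[of k] by (simp add: enn2real_leI less_imp_le)
  have "summable (\<lambda>k. measure lebesgue (A k))"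
    by (rule summable_comparison_test'[OF summable_geometric measure_le]) simp
  then have "limsup A \<in> null_sets lebesgue"
    using A(1) finite by (intro borel_cantelli_limsup1) auto
  define B where "B m = (\<Union>k\<in>{m..}. A k)" for m
  have B: "B m \<in> sets lebesgue" for m
    unfolding B_def using A(1) by (intro sets.countable_UN'[OF countableI_type]) auto
  have "decseq B" unfolding B_def decseq_def by (auto intro: order.trans)
  moreover have "(\<Inter>m. B m) \<in> null_sets lebesgue"
    using \<open>limsup A \<in> null_sets lebesgue\<close> by (simp add: B_def limsup_INF_SUP)
  ultimately obtain m where m: "bfs_norm \<rho> (\<lambda>x. f x * indicator (B m) x) < \<epsilon>"
    using bfs_norm_indicator_decseq_small[where B = B, OF sep f B _ _ \<epsilon>] by blast
  have "bfs_norm \<rho> (\<lambda>x. f x * indicator (A m) x) \<le> bfs_norm \<rho> (\<lambda>x. f x * indicator (B m) x)"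
    using A(1) B by (intro bfs_norm_indicator_mono[OF f]) (auto simp: B_def)
  with m A(3)[of m] show False by simp
qed

lemma bfs_norm_tail_small:
  assumes sep: "bfs_separable \<rho>" and f: "f \<in> bfs \<rho>" and \<epsilon>: "\<epsilon> > 0"
  shows "\<exists>R\<ge>0. bfs_norm \<rho> (\<lambda>x. f x * indicator {x. R < \<bar>x\<bar>} x) < \<epsilon>"
proof -
  define T where "T m = {x::real. real m < \<bar>x\<bar>}" for m :: nat
  have T: "T m \<in> sets lebesgue" for m
  proof -
    have "T m \<in> sets borel" unfolding T_def by measurable
    then show ?thesis by (simp add: sets_completionI_sets)
  qed
  have "decseq T" unfolding T_def decseq_def by auto
  moreover have "(\<Inter>m. T m) = {}"
  proof (intro equals0I)
    fix x assume "x \<in> (\<Inter>m. T m)"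
    moreover obtain n where "\<bar>x\<bar> < real n" using reals_Archimedean2 by blast
    ultimately show False unfolding T_def by (metis (mono_tags) INT_iff UNIV_I mem_Collect_eq less_asym)
  qed
  ultimately obtain m where "bfs_norm \<rho> (\<lambda>x. f x * indicator (T m) x) < \<epsilon>"
    using bfs_norm_indicator_decseq_small[where B = T, OF sep f T _ _ \<epsilon>] by auto
  then show ?thesis unfolding T_def by (intro exI[of _ "real m"]) auto
qed

end

section \<open>Averages of modulations\<close>

context bf_norm
begin

lemma bfs_norm_mult_le_indicator_add:
  assumes f: "f \<in> bfs \<rho>" and \<phi>: "\<phi> \<in> borel_measurable lebesgue" and S: "S \<in> sets lebesgue"
    and le_1: "\<And>x. cmod (\<phi> x) \<le> 1" and le_t: "\<And>x. x \<notin> S \<Longrightarrow> cmod (\<phi> x) \<le> t" and t: "0 \<le> t"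
  shows "bfs_norm \<rho> (\<lambda>x. f x * \<phi> x) \<le> bfs_norm \<rho> (\<lambda>x. f x * indicator S x) + t * bfs_norm \<rho> f"
proof -
  have tf: "(\<lambda>x. complex_of_real t * f x) \<in> bfs \<rho>" by (rule bfs_mult[OF f])
  have "cmod (f x * \<phi> x) \<le> cmod (f x * indicator S x) + cmod (complex_of_real t * f x)" for x
  proof (cases "x \<in> S")
    case True
    have "cmod (f x * \<phi> x) \<le> cmod (f x)"
      using mult_left_le[OF le_1[of x] norm_ge_zero[of "f x"]] by (simp add: norm_mult)
    then show ?thesis using True t by (simp add: norm_mult add_increasing2)
  next
    case False
    then show ?thesis
      using mult_left_mono[OF le_t[OF False] norm_ge_zero[of "f x"]] t by (simp add: norm_mult mult.commute)
  qed
  then have "bfs_norm \<rho> (\<lambda>x. f x * \<phi> x)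
      \<le> bfs_norm \<rho> (\<lambda>x. f x * indicator S x) + bfs_norm \<rho> (\<lambda>x. complex_of_real t * f x)"
    using bfs_measurable[OF f] \<phi> by (intro bfs_dominated_by_sum(2)[OF bfs_mult_indicator[OF f S] tf]) auto
  also have "bfs_norm \<rho> (\<lambda>x. complex_of_real t * f x) \<le> t * bfs_norm \<rho> f"
    using bfs_measurable[OF f] t by (intro bfs_dominated_by_mult(2)[OF f]) (auto simp: norm_mult)
  finally show ?thesis by simp
qed

lemma bfs_norm_mult_small:
  assumes sep: "bfs_separable \<rho>" and f: "f \<in> bfs \<rho>" and \<delta>: "\<delta> > 0"
  obtains R \<eta> t :: real where "0 \<le> R" and "\<eta> > 0" and "t > 0"
    and "\<And>\<phi>. \<phi> \<in> borel_measurable lebesgue \<Longrightarrow> (\<And>x. cmod (\<phi> x) \<le> 1) \<Longrightarrow>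
      emeasure lebesgue {x \<in> {-R..R}. t \<le> cmod (\<phi> x)} < ennreal \<eta> \<Longrightarrow>
      bfs_norm \<rho> (\<lambda>x. f x * \<phi> x) < \<delta>"
proof -
  have \<delta>3: "\<delta> / 3 > 0" using \<delta> by simp
  obtain R where R: "R \<ge> 0" and tail: "bfs_norm \<rho> (\<lambda>x. f x * indicator {x. R < \<bar>x\<bar>} x) < \<delta> / 3"
    using bfs_norm_tail_small[OF sep f \<delta>3] by blast
  obtain \<eta> where \<eta>: "\<eta> > 0" and small_set: "\<And>A. A \<in> sets lebesgue \<Longrightarrow> emeasure lebesgue A < ennreal \<eta> \<Longrightarrow>
      bfs_norm \<rho> (\<lambda>x. f x * indicator A x) < \<delta> / 3"
    using bfs_norm_indicator_small_measure[OF sep f \<delta>3] by blast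
  define t where "t = \<delta> / (3 * (bfs_norm \<rho> f + 1))"
  have t: "t > 0" using \<delta> bfs_norm_nonneg[of \<rho> f] by (simp add: t_def)
  have "t * bfs_norm \<rho> f = (\<delta> / 3) * (bfs_norm \<rho> f / (bfs_norm \<rho> f + 1))"
    using bfs_norm_nonneg[of \<rho> f] by (simp add: t_def field_simps)
  also have "\<dots> < (\<delta> / 3) * 1"
    using bfs_norm_nonneg[of \<rho> f] \<delta> by (intro mult_strict_left_mono) auto
  finally have tf: "t * bfs_norm \<rho> f < \<delta> / 3" by simp
  have T: "{x. R < \<bar>x\<bar>} \<in> sets lebesgue" by (auto intro!: sets_completionI_sets)
  show ?thesis
  proof (rule that[OF R \<eta> t])
    fix \<phi> assume \<phi> [measurable]: "\<phi> \<in> borel_measurable lebesgue" and le_1: "\<And>x. cmod (\<phi> x) \<le> 1"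
      and small: "emeasure lebesgue {x \<in> {-R..R}. t \<le> cmod (\<phi> x)} < ennreal \<eta>"
    define A where "A = {x \<in> {-R..R}. t \<le> cmod (\<phi> x)}"
    have [measurable]: "{-R..R} \<in> sets lebesgue" by (rule sets_completionI_sets) simp
    have A: "A \<in> sets lebesgue" unfolding A_def by measurable
    have "bfs_norm \<rho> (\<lambda>x. f x * indicator ({x. R < \<bar>x\<bar>} \<union> A) x) < 2 * \<delta> / 3"
      using bfs_norm_indicator_Un_le[OF f T A] tail small_set[OF A] small by (simp add: A_def)
    moreover have "bfs_norm \<rho> (\<lambda>x. f x * \<phi> x)
        \<le> bfs_norm \<rho> (\<lambda>x. f x * indicator ({x. R < \<bar>x\<bar>} \<union> A) x) + t * bfs_norm \<rho> f"
      using t le_1 by (intro bfs_norm_mult_le_indicator_add[OF f \<phi> sets.Un[OF T A]]) (auto simp: A_def)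
    ultimately show "bfs_norm \<rho> (\<lambda>x. f x * \<phi> x) < \<delta>" using tf by linarith
  qed
qed

text \<open>This replaces the weak convergence \<open>e\<^sub>h f \<rightharpoonup> 0\<close> used in the paper: suitable
  averages of the modulated functions even tend to zero in norm.\<close>
lemma bfs_norm_expo_average_small:
  fixes k :: "nat \<Rightarrow> real"
  assumes sep: "bfs_separable \<rho>" and f: "f \<in> bfs \<rho>"
    and k: "filterlim (\<lambda>n. \<bar>k n\<bar>) at_top sequentially" and \<delta>: "\<delta> > 0"
  obtains N :: nat and p :: "nat \<Rightarrow> nat" where "N > 0" and "\<And>i. M \<le> p i"
    and "bfs_norm \<rho> (\<lambda>x. f x * ((\<Sum>i<N. expo (k (p i)) x) / of_nat N)) < \<delta>"
proof -
  obtain R \<eta> t where R: "0 \<le> R" and \<eta>: "\<eta> > 0" and t: "t > 0"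
    and small: "\<And>\<phi>. \<phi> \<in> borel_measurable lebesgue \<Longrightarrow> (\<And>x. cmod (\<phi> x) \<le> 1) \<Longrightarrow>
      emeasure lebesgue {x \<in> {-R..R}. t \<le> cmod (\<phi> x)} < ennreal \<eta> \<Longrightarrow>
      bfs_norm \<rho> (\<lambda>x. f x * \<phi> x) < \<delta>"
    using bfs_norm_mult_small[OF sep f \<delta>] by blast
  obtain N p where N: "N > 0" and p: "\<And>i. M \<le> p i"
    and "emeasure lebesgue {x \<in> {-R..R}. t \<le> cmod ((\<Sum>i<N. expo (k (p i)) x) / of_nat N)}
      < ennreal \<eta>"
    using emeasure_expo_average_ge_small[OF k R \<eta> t] by blast
  moreover have "cmod ((\<Sum>i<N. expo (k (p i)) x) / of_nat N) \<le> 1" for x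
    using norm_sum[of "\<lambda>i. expo (k (p i)) x" "{..<N}"] N by (simp add: norm_divide)
  ultimately have "bfs_norm \<rho> (\<lambda>x. f x * ((\<Sum>i<N. expo (k (p i)) x) / of_nat N)) < \<delta>"
    by (intro small) (auto intro: measurable_completion)
  with N p show ?thesis by (rule that)
qed

end

section \<open>Compact operators\<close>

lemma not_tendsto_zero_subseq:
  fixes a :: "nat \<Rightarrow> real"
  assumes "\<not> a \<longlonglongrightarrow> 0"
  obtains e :: real and s :: "nat \<Rightarrow> nat" where "e > 0" and "strict_mono s" and "\<And>n. e \<le> \<bar>a (s n)\<bar>"
proof -
  obtain e where e: "e > 0" and "\<not> eventually (\<lambda>n. \<bar>a n\<bar> < e) sequentially"
    using assms unfolding tendsto_iff by (auto simp: dist_real_def)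
  then have "frequently (\<lambda>n. e \<le> \<bar>a n\<bar>) sequentially"
    by (simp add: not_eventually not_less)
  then have "infinite {n. e \<le> \<bar>a n\<bar>}"
    by (simp add: frequently_sequentially infinite_nat_iff_unbounded_le)
  then obtain s :: "nat \<Rightarrow> nat" where "strict_mono s" "\<And>n. s n \<in> {n. e \<le> \<bar>a n\<bar>}"
    using infinite_enumerate by blast
  with e show ?thesis using that by simp
qed

lemma filterlim_abs_at_top_if_at_top_or_at_bot:
  fixes h :: "nat \<Rightarrow> real"
  assumes "filterlim h at_top sequentially \<or> filterlim h at_bot sequentially"
  shows "filterlim (\<lambda>n. \<bar>h n\<bar>) at_top sequentially"
  using assms
proof
  assume "filterlim h at_bot sequentially"
  then have "filterlim (\<lambda>n. - h n) at_top sequentially"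
    by (simp add: filterlim_uminus_at_top)
  then show ?thesis by (rule filterlim_at_top_mono) (simp add: always_eventually abs_ge_minus_self)
qed (auto elim!: filterlim_at_top_mono simp: always_eventually abs_ge_self)

locale bf_compact_operator = bf_norm +
  fixes K :: "(real \<Rightarrow> complex) \<Rightarrow> (real \<Rightarrow> complex)"
  assumes compact_operator: "bfs_compact_operator \<rho> K"
begin

lemma K_in_bfs: "a \<in> bfs \<rho> \<Longrightarrow> K a \<in> bfs \<rho>"
  using compact_operator unfolding bfs_compact_operator_def by blast

lemma K_add: "a \<in> bfs \<rho> \<Longrightarrow> b \<in> bfs \<rho> \<Longrightarrow> K (\<lambda>x. a x + b x) = (\<lambda>x. K a x + K b x)"
  using compact_operator unfolding bfs_compact_operator_def by blast

lemma K_mult: "a \<in> bfs \<rho> \<Longrightarrow> K (\<lambda>x. c * a x) = (\<lambda>x. c * K a x)"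
  using compact_operator unfolding bfs_compact_operator_def by blast

lemma K_convergent_subseq:
  fixes u :: "nat \<Rightarrow> real \<Rightarrow> complex"
  assumes "\<And>n. u n \<in> bfs \<rho>" and "\<And>n. bfs_norm \<rho> (u n) \<le> B"
  obtains r g where "strict_mono r" and "g \<in> bfs \<rho>"
    and "(\<lambda>n. bfs_norm \<rho> (\<lambda>x. K (u (r n)) x - g x)) \<longlonglongrightarrow> 0"
proof -
  have "\<forall>n. u n \<in> bfs \<rho>" "\<exists>B. \<forall>n. bfs_norm \<rho> (u n) \<le> B" using assms by auto
  moreover have "\<forall>u :: nat \<Rightarrow> real \<Rightarrow> complex. (\<forall>n. u n \<in> bfs \<rho>) \<longrightarrow> (\<exists>B. \<forall>n. bfs_norm \<rho> (u n) \<le> B) \<longrightarrow>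
      (\<exists>r g. strict_mono r \<and> g \<in> bfs \<rho> \<and> (\<lambda>n. bfs_norm \<rho> (\<lambda>x. K (u (r n)) x - g x)) \<longlonglongrightarrow> 0)"
    using compact_operator unfolding bfs_compact_operator_def by blast
  ultimately show ?thesis using that by blast
qed

lemma K_sum:
  assumes "finite A" and "\<And>a. a \<in> A \<Longrightarrow> u a \<in> bfs \<rho>"
  shows "K (\<lambda>x. \<Sum>a\<in>A. u a x) = (\<lambda>x. \<Sum>a\<in>A. K (u a) x)"
  using assms
proof (induction A rule: finite_induct)
  case empty
  show ?case using K_mult[OF bfs_zero, of 0] by simp
next
  case (insert a A)
  then have "K (\<lambda>x. u a x + (\<Sum>a\<in>A. u a x)) = (\<lambda>x. K (u a) x + K (\<lambda>x. \<Sum>a\<in>A. u a x) x)"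
    using bfs_sum[of A u] by (intro K_add) auto
  with insert show ?case by simp
qed

lemma K_average:
  assumes "\<And>i. i < N \<Longrightarrow> u i \<in> bfs \<rho>"
  shows "K (\<lambda>x. (\<Sum>i<N. u i x) / of_nat N) = (\<lambda>x. (\<Sum>i<N. K (u i) x) / of_nat N)"
proof -
  have "(\<lambda>x. \<Sum>i<N. u i x) \<in> bfs \<rho>" using bfs_sum[of "{..<N}" u] assms by simp
  then have "K (\<lambda>x. inverse (of_nat N) * (\<Sum>i<N. u i x))
      = (\<lambda>x. inverse (of_nat N) * K (\<lambda>x. \<Sum>i<N. u i x) x)"
    by (rule K_mult)
  also have "K (\<lambda>x. \<Sum>i<N. u i x) = (\<lambda>x. \<Sum>i<N. K (u i) x)"
    using assms by (intro K_sum) auto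
  finally show ?thesis by (simp add: divide_inverse mult.commute)
qed

text \<open>A compact operator is bounded: otherwise some sequence in the unit ball would have images
  of unbounded norm, and no subsequence of them could converge.\<close>
lemma K_bounded_on_unit_ball:
  obtains C where "\<And>v. v \<in> bfs \<rho> \<Longrightarrow> bfs_norm \<rho> v \<le> 1 \<Longrightarrow> bfs_norm \<rho> (K v) \<le> C"
proof (rule ccontr)
  assume "\<not> thesis"
  with that have "\<exists>v. v \<in> bfs \<rho> \<and> bfs_norm \<rho> v \<le> 1 \<and> real n < bfs_norm \<rho> (K v)" for n :: nat
    by (meson not_le)
  then obtain v where v: "\<And>n. v n \<in> bfs \<rho>" "\<And>n. bfs_norm \<rho> (v n) \<le> 1"
    and big: "\<And>n. real n < bfs_norm \<rho> (K (v n))" by metis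
  obtain r g where r: "strict_mono r" and g: "g \<in> bfs \<rho>"
    and lim: "(\<lambda>n. bfs_norm \<rho> (\<lambda>x. K (v (r n)) x - g x)) \<longlonglongrightarrow> 0"
    using K_convergent_subseq[OF v] .
  obtain n where n: "bfs_norm \<rho> (\<lambda>x. K (v (r n)) x - g x) < 1" and n_ge: "1 + bfs_norm \<rho> g \<le> real n"
  proof -
    obtain M where M: "\<And>n. n \<ge> M \<Longrightarrow> bfs_norm \<rho> (\<lambda>x. K (v (r n)) x - g x) < 1"
      using lim[THEN order_tendstoD(2), of 1] by (auto simp: eventually_sequentially)
    define n where "n = max M (nat \<lceil>1 + bfs_norm \<rho> g\<rceil>)"
    have "1 + bfs_norm \<rho> g \<le> real (nat \<lceil>1 + bfs_norm \<rho> g\<rceil>)" by (rule real_nat_ceiling_ge)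
    also have "\<dots> \<le> real n" by (simp add: n_def)
    finally show ?thesis using M[of n] that by (simp add: n_def)
  qed
  have "bfs_norm \<rho> (K (v (r n))) \<le> bfs_norm \<rho> (\<lambda>x. K (v (r n)) x - g x) + bfs_norm \<rho> g"
    by (rule bfs_norm_le_diff_add[OF K_in_bfs[OF v(1)] g])
  also have "\<dots> < real n" using n n_ge by linarith
  also have "\<dots> \<le> real (r n)" using seq_suble[OF r, of n] by simp
  finally show False using big[of "r n"] by simp
qed

lemma K_bounded:
  obtains C where "C \<ge> 0" and "\<And>v. v \<in> bfs \<rho> \<Longrightarrow> bfs_norm \<rho> (K v) \<le> C * bfs_norm \<rho> v"
proof -
  obtain C where C: "\<And>v. v \<in> bfs \<rho> \<Longrightarrow> bfs_norm \<rho> v \<le> 1 \<Longrightarrow> bfs_norm \<rho> (K v) \<le> C"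
    using K_bounded_on_unit_ball by blast
  have C_nonneg: "C \<ge> 0"
    using C[OF bfs_zero] bfs_norm_nonneg[of \<rho> "K (\<lambda>x. 0)"] by (simp add: bfs_norm_zero)
  have scaled: "bfs_norm \<rho> (K v) \<le> C * s" if v: "v \<in> bfs \<rho>" and s: "s > 0" "bfs_norm \<rho> v \<le> s" for v s
  proof -
    define v' where "v' = (\<lambda>x. complex_of_real (inverse s) * v x)"
    have v': "v' \<in> bfs \<rho>" unfolding v'_def by (rule bfs_mult[OF v])
    have "bfs_norm \<rho> v' \<le> inverse s * bfs_norm \<rho> v"
      using bfs_norm_mult_const_le[OF v, of "complex_of_real (inverse s)"] s
      by (simp add: v'_def norm_inverse del: of_real_inverse)
    also have "\<dots> \<le> 1" using s by (simp add: field_simps)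
    finally have "bfs_norm \<rho> (K v') \<le> C" by (rule C[OF v'])
    have "v = (\<lambda>x. complex_of_real s * v' x)" using s by (simp add: v'_def fun_eq_iff)
    then have "K v = K (\<lambda>x. complex_of_real s * v' x)" by simp
    also have "\<dots> = (\<lambda>x. complex_of_real s * K v' x)" by (rule K_mult[OF v'])
    finally have "bfs_norm \<rho> (K v) \<le> s * bfs_norm \<rho> (K v')"
      using bfs_norm_mult_const_le[OF K_in_bfs[OF v'], of "complex_of_real s"] s by simp
    also have "\<dots> \<le> s * C" using \<open>bfs_norm \<rho> (K v') \<le> C\<close> s by simp
    finally show ?thesis by (simp add: mult.commute)
  qed
  show ?thesis
  proof (rule that[OF C_nonneg])
    fix v assume v: "v \<in> bfs \<rho>"
    show "bfs_norm \<rho> (K v) \<le> C * bfs_norm \<rho> v"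
    proof (rule field_le_epsilon)
      fix e :: real assume e: "e > 0"
      have "bfs_norm \<rho> (K v) \<le> C * (bfs_norm \<rho> v + e / (C + 1))"
        using C_nonneg e bfs_norm_nonneg[of \<rho> v]
        by (intro scaled[OF v] add_nonneg_pos divide_pos_pos) auto
      also have "\<dots> \<le> C * bfs_norm \<rho> v + e"
        using C_nonneg e by (simp add: field_simps)
      finally show "bfs_norm \<rho> (K v) \<le> C * bfs_norm \<rho> v + e" .
    qed
  qed
qed

lemma K_tendsto_zero_if_averages_small:
  fixes u :: "nat \<Rightarrow> real \<Rightarrow> complex"
  assumes u: "\<And>n. u n \<in> bfs \<rho>" and bounded: "\<And>n. bfs_norm \<rho> (u n) \<le> B"
    and averages: "\<And>(q :: nat \<Rightarrow> nat) \<delta> M. strict_mono q \<Longrightarrow> \<delta> > 0 \<Longrightarrow>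
        \<exists>N (p :: nat \<Rightarrow> nat). N > 0 \<and> (\<forall>i. M \<le> p i) \<and>
        bfs_norm \<rho> (\<lambda>x. (\<Sum>i<N. u (q (p i)) x) / of_nat N) < \<delta>"
  shows "(\<lambda>n. bfs_norm \<rho> (K (u n))) \<longlonglongrightarrow> 0"
proof (rule ccontr)
  assume "\<not> ?thesis"
  then obtain e and s :: "nat \<Rightarrow> nat" where e: "e > 0" and s: "strict_mono s"
    and big: "\<And>n. e \<le> \<bar>bfs_norm \<rho> (K (u (s n)))\<bar>"
    by (rule not_tendsto_zero_subseq) blast
  obtain r g where r: "strict_mono r" and g: "g \<in> bfs \<rho>"
    and lim: "(\<lambda>n. bfs_norm \<rho> (\<lambda>x. K (u (s (r n))) x - g x)) \<longlonglongrightarrow> 0"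
    using K_convergent_subseq[of "\<lambda>n. u (s n)"] u bounded by blast
  define q where "q n = s (r n)" for n
  have q: "strict_mono q" unfolding q_def using s r by (rule strict_mono_compose)
  obtain M where M: "\<And>n. M \<le> n \<Longrightarrow> bfs_norm \<rho> (\<lambda>x. K (u (q n)) x - g x) < e / 3"
    using lim[THEN order_tendstoD(2), of "e / 3"] e by (auto simp: eventually_sequentially q_def)
  obtain C where C: "C \<ge> 0" "\<And>v. v \<in> bfs \<rho> \<Longrightarrow> bfs_norm \<rho> (K v) \<le> C * bfs_norm \<rho> v"
    using K_bounded by blast
  obtain N p where N: "N > 0" and p: "\<And>i. M \<le> p i"
    and w_small: "bfs_norm \<rho> (\<lambda>x. (\<Sum>i<N. u (q (p i)) x) / of_nat N) < e / 3 / (C + 1)"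
    using averages[OF q, of "e / 3 / (C + 1)" M] e C(1) by auto
  define w where "w = (\<lambda>x. (\<Sum>i<N. u (q (p i)) x) / of_nat N)"
  have w: "w \<in> bfs \<rho>"
    unfolding w_def divide_inverse mult.commute[of _ "inverse _"]
    using bfs_sum[of "{..<N}" "\<lambda>i. u (q (p i))"] u by (intro bfs_mult) simp
  have "bfs_norm \<rho> (\<lambda>x. K w x - g x) \<le> e / 3"
    unfolding w_def K_average[OF u] using N u K_in_bfs g M p
    by (intro bfs_norm_average_diff_le less_imp_le) auto
  moreover have "bfs_norm \<rho> (K w) \<le> e / 3"
  proof -
    have "bfs_norm \<rho> (K w) \<le> C * (e / 3 / (C + 1))"
      using C(2)[OF w] w_small C(1) unfolding w_def by (meson mult_left_mono order.trans less_imp_le)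
    also have "\<dots> \<le> e / 3" using C(1) e by (simp add: field_simps)
    finally show ?thesis .
  qed
  ultimately have "bfs_norm \<rho> g \<le> 2 * e / 3"
    using bfs_norm_le_diff_add[OF g K_in_bfs[OF w]] bfs_norm_diff_commute[of \<rho> g "K w"] by linarith
  moreover have "bfs_norm \<rho> (K (u (q M))) \<le> bfs_norm \<rho> (\<lambda>x. K (u (q M)) x - g x) + bfs_norm \<rho> g"
    by (rule bfs_norm_le_diff_add[OF K_in_bfs[OF u] g])
  ultimately have "bfs_norm \<rho> (K (u (q M))) < e" using M[of M] by linarith
  with big[of "r M"] show False by (simp add: q_def bfs_norm_nonneg)
qed

lemma K_modulated_tendsto_zero:
  fixes h :: "nat \<Rightarrow> real"
  assumes sep: "bfs_separable \<rho>" and f: "f \<in> bfs \<rho>"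
    and h: "filterlim (\<lambda>n. \<bar>h n\<bar>) at_top sequentially"
  shows "(\<lambda>n. bfs_norm \<rho> (K (\<lambda>y. f y / expo (h n) y))) \<longlonglongrightarrow> 0"
proof (rule K_tendsto_zero_if_averages_small)
  have modulated: "(\<lambda>y. f y / expo l y) = (\<lambda>y. expo (- l) y * f y)" for l
    by (simp add: divide_expo mult.commute)
  show "(\<lambda>y. f y / expo (h n) y) \<in> bfs \<rho>" for n
    unfolding modulated using bfs_measurable[OF f] expo_measurable_lebesgue
    by (intro bfs_dominated_by_mult(1)[OF f _ zero_le_one] borel_measurable_times) (auto simp: norm_mult)
  show "bfs_norm \<rho> (\<lambda>y. f y / expo (h n) y) \<le> bfs_norm \<rho> f" for n
    unfolding modulated by (simp add: bfs_norm_mult_unimodular)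
  fix q :: "nat \<Rightarrow> nat" and \<delta> :: real and M :: nat
  assume q: "strict_mono q" and \<delta>: "\<delta> > 0"
  have "filterlim (\<lambda>n. \<bar>- h (q n)\<bar>) at_top sequentially"
    using filterlim_compose[OF h filterlim_subseq[OF q]] by simp
  then obtain N and p :: "nat \<Rightarrow> nat" where N: "N > 0" and p: "\<And>i. M \<le> p i"
    and small: "bfs_norm \<rho> (\<lambda>x. f x * ((\<Sum>i<N. expo (- h (q (p i))) x) / of_nat N)) < \<delta>"
    by (rule bfs_norm_expo_average_small[where k = "\<lambda>n. - h (q n)", OF sep f _ \<delta>]) blast
  have eq: "(\<lambda>x. (\<Sum>i<N. f x / expo (h (q (p i))) x) / of_nat N)
      = (\<lambda>x. f x * ((\<Sum>i<N. expo (- h (q (p i))) x) / of_nat N))"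
    by (simp add: divide_expo sum_distrib_left)
  show "\<exists>N p. N > 0 \<and> (\<forall>i. M \<le> p i) \<and>
      bfs_norm \<rho> (\<lambda>x. (\<Sum>i<N. f x / expo (h (q (p i))) x) / of_nat N) < \<delta>"
  proof (intro exI[of _ N] exI[of _ p] conjI allI)
    show "bfs_norm \<rho> (\<lambda>x. (\<Sum>i<N. f x / expo (h (q (p i))) x) / of_nat N) < \<delta>"
      unfolding eq by (rule small)
  qed (use N p in auto)
qed

end

theorem lemma3p2:
  fixes \<rho> :: "(real \<Rightarrow> real) \<Rightarrow> ennreal"
    and K :: "(real \<Rightarrow> complex) \<Rightarrow> (real \<Rightarrow> complex)"
    and h :: "nat \<Rightarrow> real"
  assumes "banach_function_norm \<rho>"
    and "bfs_separable \<rho>"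
    and "bfs_compact_operator \<rho> K"
    and "filterlim h at_top sequentially \<or> filterlim h at_bot sequentially"
    and "f \<in> bfs \<rho>"
  shows "(\<lambda>n. bfs_norm \<rho> (\<lambda>x. expo (h n) x * K (\<lambda>y. f y / expo (h n) y) x))
           \<longlonglongrightarrow> 0"
proof -
  interpret bf_compact_operator \<rho> K
    using assms(1,3) by unfold_locales
  show ?thesis
    unfolding bfs_norm_mult_unimodular[OF norm_expo]
    using K_modulated_tendsto_zero[OF assms(2,5) filterlim_abs_at_top_if_at_top_or_at_bot[OF assms(4)]] .
qed

end
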